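(* Let $f\colon\mathbb{R}^d\to\mathbb{R}\cup\{\infty\}$ be a lower semicontinuous convex function, let $Q\subseteq\mathbb{R}^d$ be a nonempty closed convex set contained in the domain of $f$, and assume the set $X^*$ of minimizers of $f$ over $Q$ is nonempty, with minimum value $f^*$. Suppose $f$ is $\mu$-strongly convex on $Q$ for some $\mu>0$. Let $g(x;\xi)$ be a stochastic subgradient oracle with $\mathbb{E}_{\xi\sim D}\,g(x;\xi)\in\partial f(x)$ for all $x\in Q$, and suppose there are constants $L_0,L_1\ge0$ with $$\mathbb{E}_{\xi}\|g(x;\xi)\|^2\le L_0^2+L_1(f(x)-f^* )\qquad\text{for all }x\in Q.$$ Fix $x^*\in X^*$, $x_0\in Q$, and consider $x_{k+1}=P_Q(x_k-\alpha_kg(x_k;\xi_k))$ with $\xi_k\sim D$ i.i.d. and $$\alpha_k=\frac{2}{\mu(k+2)+\frac{L_1^2}{\mu(k+1)}}.$$ Then for every $T\ge0$, $$\mathbb{E}_{\xi_{0\dots T}}\left[f\left(\frac{\sum_{k=0}^T(k+1)(2-L_1\alpha_k)x_k}{\sum_{k=0}^T(k+1)(2-L_1\alpha_k)}\right)-f^*\right]\le\frac{2L_0^2(T+1)+L_1^2\|x_0-x^*\|^2/2}{\mu\sum_{k=0}^T(k+1)(2-L_1\alpha_k)},$$ and also $$\mathbb{E}_{\xi_{0\dots T}}\left[f\left(\frac{2}{(T+1)(T+2)}\sum_{k=0}^T(k+1)x_k\right)-f^*\right]\le\frac{4L_0^2}{\mu(T+2)}+\frac{L_1^2\|x_0-x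^*\|^2}{\mu(T+1)(T+2)}.$$
   Context: $f$ is $\mu$-strongly convex on $Q$ if for every $x\in Q$ and $g\in\partial f(x)$, $f(y)\ge f(x)+g^T(y-x)+\frac{\mu}{2}\|y-x\|^2$ for all $y\in Q$. $P_Q$ is orthogonal projection onto $Q$; $\partial f(x)=\{g: f(y)\ge f(x)+g^T(y-x)\ \forall y\in\mathbb{R}^d\}$; $\mathbb{E}_{\xi_{0\dots T}}$ is expectation over the i.i.d. samples $\xi_0,\dots,\xi_T$. *)

theory Defs
  imports "HOL-Analysis.Analysis" "HOL-Probability.Probability"
begin

definition lsc_fun :: "('a::topological_space \<Rightarrow> ereal) \<Rightarrow> bool" where
  "lsc_fun f \<longleftrightarrow> (\<forall>x c. c < f x \<longrightarrow> (\<forall>\<^sub>F y in at x. c < f y))"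

definition convex_fun :: "('a::real_vector \<Rightarrow> ereal) \<Rightarrow> bool" where
  "convex_fun f \<longleftrightarrow> (\<forall>x y t. 0 \<le> t \<and> t \<le> 1 \<longrightarrow>
      f ((1 - t) *\<^sub>R x + t *\<^sub>R y) \<le> ereal (1 - t) * f x + ereal t * f y)"

definition subdiff :: "('a::real_inner \<Rightarrow> ereal) \<Rightarrow> 'a \<Rightarrow> 'a set" where
  "subdiff f x = {g. \<forall>y. f y \<ge> f x + ereal (g \<bullet> (y - x))}"

definition strongly_convex_on :: "real \<Rightarrow> 'a::real_inner set \<Rightarrow> ('a \<Rightarrow> ereal) \<Rightarrow> bool" where
  "strongly_convex_on \<mu> Q f \<longleftrightarrow> (\<forall>x\<in>Q. \<forall>g\<in>subdiff f x. \<forall>y\<in>Q.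
      f y \<ge> f x + ereal (g \<bullet> (y - x) + \<mu> / 2 * (norm (y - x))\<^sup>2))"

definition step_size :: "real \<Rightarrow> real \<Rightarrow> nat \<Rightarrow> real" where
  "step_size \<mu> L1 k = 2 / (\<mu> * (real k + 2) + L1\<^sup>2 / (\<mu> * (real k + 1)))"

primrec psg_iter :: "'a::euclidean_space set \<Rightarrow> ('a \<Rightarrow> 'b \<Rightarrow> 'a) \<Rightarrow> (nat \<Rightarrow> real)
    \<Rightarrow> 'a \<Rightarrow> (nat \<Rightarrow> 'b) \<Rightarrow> nat \<Rightarrow> 'a" where
  "psg_iter Q g \<alpha> x0 \<omega> 0 = x0"
| "psg_iter Q g \<alpha> x0 \<omega> (Suc k) =
     closest_point Q (psg_iter Q g \<alpha> x0 \<omega> k - \<alpha> k *\<^sub>R g (psg_iter Q g \<alpha> x0 \<omega> k) (\<omega> k))"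

end

theory Submission
  imports Defs
begin

(* A Lyapunov argument. For x_k in Q, nonexpansiveness of the projection, strong convexity
   and the second-moment bound give
     E |x_{k+1} - xstar|^2 <= (1 - mu a_k) |x_k - xstar|^2 + a_k^2 L0^2 - a_k (2 - L1 a_k) (f x_k - fstar).
   After multiplication by (k+1)/a_k the step size makes the distance terms telescope, with
   coefficients beta_k = (k(k+1) mu + L1^2/mu)/2, so that
     sum_k (k+1)(2 - L1 a_k) E[f x_k - fstar] <= beta_0 |x_0 - xstar|^2 + L0^2 sum_k (k+1) a_k,
   and (k+1) a_k <= 2/mu. Jensen's inequality for both averages finishes the proof; the second
   one uses L1 a_k <= 1, i.e. (k+1) <= (k+1)(2 - L1 a_k). *)

lemma lsc_fun_borel_measurable:
  fixes f :: "'a::euclidean_space \<Rightarrow> ereal"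
  assumes "lsc_fun f"
  shows "f \<in> borel_measurable borel"
proof (rule borel_measurableI_greater)
  fix c
  have "open {x. c < f x}"
  proof (subst open_subopen, intro ballI)
    fix x assume "x \<in> {x. c < f x}"
    then have "c < f x" by simp
    with assms have "\<forall>\<^sub>F y in nhds x. c < f y"
      unfolding lsc_fun_def by (simp add: eventually_nhds_conv_at)
    then obtain S where "open S" "x \<in> S" "\<forall>y\<in>S. c < f y" unfolding eventually_nhds by blast
    then show "\<exists>T. open T \<and> x \<in> T \<and> T \<subseteq> {x. c < f x}" by blast
  qed
  then show "{x \<in> space borel. c < f x} \<in> sets borel" by simp
qed

lemma convex_on_real_of_ereal:
  fixes f :: "'a::real_vector \<Rightarrow> ereal"
  assumes "convex_fun f" "convex Q" "\<forall>x\<in>Q. f x < \<infinity>" "\<forall>x. f x \<noteq> -\<infinity>"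
  shows "convex_on Q (\<lambda>x. real_of_ereal (f x))"
proof (rule convex_onI[OF _ \<open>convex Q\<close>])
  have real: "f x = ereal (real_of_ereal (f x))" if "x \<in> Q" for x
    using assms(3,4) that by (cases "f x") auto
  fix t :: real and x y assume t: "0 < t" "t < 1" and xy: "x \<in> Q" "y \<in> Q"
  have "(1 - t) *\<^sub>R x + t *\<^sub>R y \<in> Q" using \<open>convex Q\<close> xy t by (simp add: convex_def)
  moreover have "f ((1 - t) *\<^sub>R x + t *\<^sub>R y) \<le> ereal (1 - t) * f x + ereal t * f y"
    using assms(1) t unfolding convex_fun_def by simp
  ultimately show "real_of_ereal (f ((1 - t) *\<^sub>R x + t *\<^sub>R y))
      \<le> (1 - t) * real_of_ereal (f x) + t * real_of_ereal (f y)"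
    using real[OF xy(1)] real[OF xy(2)] real by (metis ereal_less_eq(3) times_ereal.simps(1) plus_ereal.simps(1))
qed

lemma nn_integral_PiM_component:
  fixes D :: "'b measure" and h :: "(nat \<Rightarrow> 'b) \<Rightarrow> 'b \<Rightarrow> ennreal"
  assumes "prob_space D" and "k \<le> T"
    and h_meas: "(\<lambda>(\<omega>, \<xi>). h \<omega> \<xi>) \<in> borel_measurable (PiM {..T} (\<lambda>_. D) \<Otimes>\<^sub>M D)"
    and h_upd: "\<And>\<omega> y. h (fun_upd \<omega> k y) = h \<omega>"
  shows "(\<integral>\<^sup>+\<omega>. h \<omega> (\<omega> k) \<partial>PiM {..T} (\<lambda>_. D))
       = (\<integral>\<^sup>+\<omega>. (\<integral>\<^sup>+\<xi>. h \<omega> \<xi> \<partial>D) \<partial>PiM {..T} (\<lambda>_. D))"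
proof -
  interpret D: prob_space D by fact
  interpret P: product_sigma_finite "\<lambda>_. D"
    by (simp add: product_sigma_finite_def D.sigma_finite_measure_axioms)
  define I where "I = {..T} - {k}"
  have split: "{..T} = insert k I" and I: "finite I" "k \<notin> I"
    using \<open>k \<le> T\<close> by (auto simp: I_def)
  have "(\<lambda>\<omega>. (\<omega>, \<omega> k)) \<in> measurable (PiM {..T} (\<lambda>_. D)) (PiM {..T} (\<lambda>_. D) \<Otimes>\<^sub>M D)"
    using \<open>k \<le> T\<close> by (intro measurable_Pair) (auto intro: measurable_component_singleton)
  from measurable_comp[OF this h_meas]
  have diag_meas: "(\<lambda>\<omega>. h \<omega> (\<omega> k)) \<in> borel_measurable (PiM {..T} (\<lambda>_. D))"
    by (simp add: comp_def)
  have inner_meas: "(\<lambda>\<omega>. \<integral>\<^sup>+\<xi>. h \<omega> \<xi> \<partial>D) \<in> borel_measurable (PiM {..T} (\<lambda>_. D))"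
    using D.borel_measurable_nn_integral_fst[OF h_meas] by simp
  have "(\<integral>\<^sup>+\<omega>. h \<omega> (\<omega> k) \<partial>PiM {..T} (\<lambda>_. D)) = (\<integral>\<^sup>+\<omega>. (\<integral>\<^sup>+\<xi>. h \<omega> \<xi> \<partial>D) \<partial>PiM I (\<lambda>_. D))"
    using P.product_nn_integral_insert[OF I, of "\<lambda>\<omega>. h \<omega> (\<omega> k)"] diag_meas
    unfolding split by (simp add: h_upd)
  also have "\<dots> = (\<integral>\<^sup>+\<omega>. (\<integral>\<^sup>+\<xi>. h \<omega> \<xi> \<partial>D) \<partial>PiM {..T} (\<lambda>_. D))"
    using P.product_nn_integral_insert[OF I, of "\<lambda>\<omega>. \<integral>\<^sup>+\<xi>. h \<omega> \<xi> \<partial>D"] inner_meas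
    unfolding split by (simp add: h_upd D.emeasure_space_1)
  finally show ?thesis .
qed

lemma psg_iter_cong:
  assumes "\<And>j. j < k \<Longrightarrow> \<omega> j = \<omega>' j"
  shows "psg_iter Q g \<alpha> x0 \<omega> k = psg_iter Q g \<alpha> x0 \<omega>' k"
  using assms by (induction k) auto

lemma psg_iter_fun_upd:
  assumes "k \<le> m"
  shows "psg_iter Q g \<alpha> x0 (fun_upd \<omega> m y) k = psg_iter Q g \<alpha> x0 \<omega> k"
  using assms by (intro psg_iter_cong) auto

lemma psg_iter_in_set:
  assumes "convex Q" "closed Q" "x0 \<in> Q"
  shows "psg_iter Q g \<alpha> x0 \<omega> k \<in> Q"
  using assms by (induction k) (auto intro: closest_point_in_set)

lemma borel_measurable_closest_point:
  fixes Q :: "'a::euclidean_space set"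
  assumes "convex Q" "closed Q" "Q \<noteq> {}"
  shows "closest_point Q \<in> borel_measurable borel"
  using continuous_on_closest_point[OF assms] by (rule borel_measurable_continuous_onI)

lemma measurable_psg_iter:
  fixes Q :: "'a::euclidean_space set" and D :: "'b measure"
  assumes "convex Q" "closed Q" "Q \<noteq> {}"
    and g_meas: "(\<lambda>(x, \<xi>). g x \<xi>) \<in> borel_measurable (borel \<Otimes>\<^sub>M D)"
    and "k \<le> Suc T"
  shows "(\<lambda>\<omega>. psg_iter Q g \<alpha> x0 \<omega> k) \<in> borel_measurable (PiM {..T} (\<lambda>_. D))"
  using \<open>k \<le> Suc T\<close>
proof (induction k)
  case (Suc k)
  then have IH: "(\<lambda>\<omega>. psg_iter Q g \<alpha> x0 \<omega> k) \<in> borel_measurable (PiM {..T} (\<lambda>_. D))"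
    by simp
  have "(\<lambda>\<omega>. (psg_iter Q g \<alpha> x0 \<omega> k, \<omega> k)) \<in> measurable (PiM {..T} (\<lambda>_. D)) (borel \<Otimes>\<^sub>M D)"
    using Suc.prems by (intro measurable_Pair IH) (auto intro: measurable_component_singleton)
  from measurable_comp[OF this g_meas]
  have "(\<lambda>\<omega>. g (psg_iter Q g \<alpha> x0 \<omega> k) (\<omega> k)) \<in> borel_measurable (PiM {..T} (\<lambda>_. D))"
    by (simp add: comp_def)
  with IH have "(\<lambda>\<omega>. psg_iter Q g \<alpha> x0 \<omega> k - \<alpha> k *\<^sub>R g (psg_iter Q g \<alpha> x0 \<omega> k) (\<omega> k))
      \<in> borel_measurable (PiM {..T} (\<lambda>_. D))"
    by measurable
  from measurable_comp[OF this borel_measurable_closest_point[OF assms(1-3)]]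
  show ?case by (simp add: comp_def)
qed simp

definition lyapunov_coeff :: "real \<Rightarrow> real \<Rightarrow> nat \<Rightarrow> real" where
  "lyapunov_coeff \<mu> L1 k = ((real k + 1) * real k * \<mu> + L1\<^sup>2 / \<mu>) / 2"

lemma lyapunov_coeff_nonneg: "\<mu> > 0 \<Longrightarrow> lyapunov_coeff \<mu> L1 k \<ge> 0"
  unfolding lyapunov_coeff_def by simp

lemma step_size_pos: "\<mu> > 0 \<Longrightarrow> step_size \<mu> L1 k > 0"
  unfolding step_size_def by (simp add: add_pos_nonneg)

lemma step_size_mult_le:
  assumes "\<mu> > 0"
  shows "(real k + 1) * step_size \<mu> L1 k \<le> 2 / \<mu>"
proof -
  have "(real k + 1) * step_size \<mu> L1 k \<le> 2 * (real k + 1) / (\<mu> * (real k + 2))"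
    unfolding step_size_def using assms by (simp add: frac_le)
  also have "\<dots> \<le> 2 * (real k + 1) / (\<mu> * (real k + 1))"
    using assms by (intro divide_left_mono mult_left_mono mult_pos_pos) auto
  also have "\<dots> = 2 / \<mu>"
    by (rule mult_divide_mult_cancel_right) simp
  finally show ?thesis .
qed

lemma L1_step_size_le_1:
  assumes "\<mu> > 0"
  shows "L1 * step_size \<mu> L1 k \<le> 1"
proof -
  define m where "m = \<mu> * (real k + 1)"
  have "m > 0" using assms by (simp add: m_def)
  have "2 * L1 * m \<le> m * m + L1\<^sup>2"
    using sum_squares_bound[of m L1] by (simp add: power2_eq_square algebra_simps)
  then have "2 * L1 \<le> m + L1\<^sup>2 / m"
    using \<open>m > 0\<close> by (simp add: field_simps)
  also have "\<dots> \<le> \<mu> * (real k + 2) + L1\<^sup>2 / m"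
    using assms by (simp add: m_def)
  finally have "2 * L1 \<le> \<mu> * (real k + 2) + L1\<^sup>2 / m" .
  moreover have "0 < \<mu> * (real k + 2) + L1\<^sup>2 / m"
    using \<open>m > 0\<close> assms by (simp add: add_pos_nonneg)
  ultimately show ?thesis
    unfolding step_size_def m_def[symmetric] by simp
qed

lemma lyapunov_coeff_step_size:
  assumes "\<mu> > 0"
  shows "(real k + 1) / step_size \<mu> L1 k = lyapunov_coeff \<mu> L1 (Suc k)"
    and "(real k + 1) / step_size \<mu> L1 k * (1 - \<mu> * step_size \<mu> L1 k) = lyapunov_coeff \<mu> L1 k"
proof -
  have "\<mu> * (real k + 1) > 0" using assms by simp
  then have "(real k + 1) * (L1\<^sup>2 / (\<mu> * (real k + 1))) = L1\<^sup>2 / \<mu>"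
    using assms by (simp add: field_simps)
  then have inv: "(real k + 1) / step_size \<mu> L1 k = (\<mu> * (real k + 1) * (real k + 2) + L1\<^sup>2 / \<mu>) / 2"
    unfolding step_size_def by (simp add: algebra_simps)
  then show "(real k + 1) / step_size \<mu> L1 k = lyapunov_coeff \<mu> L1 (Suc k)"
    unfolding lyapunov_coeff_def by (simp add: algebra_simps)
  have "(real k + 1) / step_size \<mu> L1 k * (1 - \<mu> * step_size \<mu> L1 k)
      = (real k + 1) / step_size \<mu> L1 k - \<mu> * (real k + 1)"
    using step_size_pos[OF assms, of L1 k] by (simp add: right_diff_distrib)
  then show "(real k + 1) / step_size \<mu> L1 k * (1 - \<mu> * step_size \<mu> L1 k) = lyapunov_coeff \<mu> L1 k"
    unfolding inv lyapunov_coeff_def by (simp add: algebra_simps)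
qed

lemma lyapunov_coeff_recursion:
  fixes \<mu> L0 L1 d e :: real and k :: nat
  assumes "\<mu> > 0"
  defines "a \<equiv> step_size \<mu> L1 k"
  shows "lyapunov_coeff \<mu> L1 (Suc k) * ((1 - \<mu> * a) * d + a\<^sup>2 * L0\<^sup>2 - a * (2 - L1 * a) * e)
           + (real k + 1) * (2 - L1 * a) * e
         = lyapunov_coeff \<mu> L1 k * d + (real k + 1) * a * L0\<^sup>2"
proof -
  define c where "c = (real k + 1) / a"
  have "a > 0" using step_size_pos[OF assms(1)] by (simp add: a_def)
  then have ca: "c * a = real k + 1" by (simp add: c_def)
  have coeffs: "lyapunov_coeff \<mu> L1 (Suc k) = c" "lyapunov_coeff \<mu> L1 k = c * (1 - \<mu> * a)"
    using lyapunov_coeff_step_size[OF assms(1)] by (simp_all add: a_def c_def)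
  have "lyapunov_coeff \<mu> L1 (Suc k) * ((1 - \<mu> * a) * d + a\<^sup>2 * L0\<^sup>2 - a * (2 - L1 * a) * e)
           + (real k + 1) * (2 - L1 * a) * e
      = lyapunov_coeff \<mu> L1 k * d + (c * a) * a * L0\<^sup>2 - (c * a) * (2 - L1 * a) * e
           + (real k + 1) * (2 - L1 * a) * e"
    unfolding coeffs by (simp add: power2_eq_square algebra_simps)
  then show ?thesis unfolding ca by simp
qed

locale psg_run = D: prob_space D
  for D :: "'b measure" +
  fixes f :: "'a::euclidean_space \<Rightarrow> ereal" and Q :: "'a set" and g :: "'a \<Rightarrow> 'b \<Rightarrow> 'a"
    and \<mu> L0 L1 fstar :: real and xstar x0 :: 'a and T :: nat
  assumes f_proper: "\<forall>x. f x \<noteq> -\<infinity>"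
    and f_lsc: "lsc_fun f"
    and f_convex: "convex_fun f"
    and Q_ne: "Q \<noteq> {}" and Q_closed: "closed Q" and Q_convex: "convex Q"
    and Q_dom: "\<forall>x\<in>Q. f x < \<infinity>"
    and xstar_Q: "xstar \<in> Q" and fstar_def: "f xstar = ereal fstar"
    and xstar_min: "\<forall>y\<in>Q. f xstar \<le> f y"
    and mu_pos: "\<mu> > 0"
    and strong: "strongly_convex_on \<mu> Q f"
    and g_meas: "(\<lambda>(x, \<xi>). g x \<xi>) \<in> borel_measurable (borel \<Otimes>\<^sub>M D)"
    and g_int: "\<forall>x\<in>Q. integrable D (g x)"
    and g_unbiased: "\<forall>x\<in>Q. (\<integral>\<xi>. g x \<xi> \<partial>D) \<in> subdiff f x"
    and L1_nonneg: "L1 \<ge> 0"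
    and g_second_moment: "\<forall>x\<in>Q. (\<integral>\<^sup>+\<xi>. ennreal ((norm (g x \<xi>))\<^sup>2) \<partial>D)
                         \<le> ennreal (L0\<^sup>2 + L1 * (real_of_ereal (f x) - fstar))"
    and x0_Q: "x0 \<in> Q"
begin

abbreviation samples :: "(nat \<Rightarrow> 'b) measure" where
  "samples \<equiv> PiM {..T} (\<lambda>_. D)"

abbreviation \<alpha> :: "nat \<Rightarrow> real" where
  "\<alpha> \<equiv> step_size \<mu> L1"

abbreviation iter :: "nat \<Rightarrow> (nat \<Rightarrow> 'b) \<Rightarrow> 'a" where
  "iter k \<omega> \<equiv> psg_iter Q g \<alpha> x0 \<omega> k"

abbreviation weight :: "nat \<Rightarrow> real" where
  "weight k \<equiv> (real k + 1) * (2 - L1 * \<alpha> k)"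

abbreviation \<beta> :: "nat \<Rightarrow> real" where
  "\<beta> \<equiv> lyapunov_coeff \<mu> L1"

definition gap :: "'a \<Rightarrow> real" where
  "gap x = real_of_ereal (f x) - fstar"

definition expected_sq_dist :: "nat \<Rightarrow> ennreal" where
  "expected_sq_dist k = (\<integral>\<^sup>+\<omega>. ennreal ((norm (iter k \<omega> - xstar))\<^sup>2) \<partial>samples)"

definition expected_gap :: "nat \<Rightarrow> ennreal" where
  "expected_gap k = (\<integral>\<^sup>+\<omega>. ennreal (gap (iter k \<omega>)) \<partial>samples)"

lemma samples_prob_space: "prob_space samples"
  by (intro prob_space_PiM) (simp add: D.prob_space_axioms)

lemma iter_in_Q: "iter k \<omega> \<in> Q"
  using Q_convex Q_closed x0_Q by (rule psg_iter_in_set)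

lemma f_eq_gap: "x \<in> Q \<Longrightarrow> f x = ereal (fstar + gap x)"
  using Q_dom f_proper unfolding gap_def by (cases "f x") auto

lemma gap_nonneg: "x \<in> Q \<Longrightarrow> gap x \<ge> 0"
  using xstar_min f_eq_gap[of x] unfolding fstar_def by force

lemma weight_ge: "weight k \<ge> real k + 1"
  using L1_step_size_le_1[OF mu_pos, of L1 k] by (simp add: mult_le_cancel_left1)

lemma weight_nonneg: "weight k \<ge> 0"
  using weight_ge[of k] by simp

lemma borel_measurable_gap[measurable]: "gap \<in> borel_measurable borel"
  unfolding gap_def using lsc_fun_borel_measurable[OF f_lsc] by measurable

lemma measurable_iter[measurable]: "k \<le> Suc T \<Longrightarrow> iter k \<in> borel_measurable samples"
  by (rule measurable_psg_iter[OF Q_convex Q_closed Q_ne g_meas])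

lemma sq_dist_projected_step_le:
  assumes "x \<in> Q"
  shows "(norm (closest_point Q (x - a *\<^sub>R v) - xstar))\<^sup>2
       \<le> (norm (x - xstar))\<^sup>2 - 2 * a * ((x - xstar) \<bullet> v) + a\<^sup>2 * (norm v)\<^sup>2"
proof -
  have "norm (closest_point Q (x - a *\<^sub>R v) - xstar) \<le> norm (x - a *\<^sub>R v - xstar)"
    using closest_point_lipschitz[OF Q_convex Q_closed Q_ne, of "x - a *\<^sub>R v" xstar]
      closest_point_self[OF xstar_Q]
    by (simp add: dist_norm)
  then have "(norm (closest_point Q (x - a *\<^sub>R v) - xstar))\<^sup>2 \<le> (norm ((x - xstar) - a *\<^sub>R v))\<^sup>2"
    by (simp add: power_mono algebra_simps)
  also have "\<dots> = (norm (x - xstar))\<^sup>2 - 2 * a * ((x - xstar) \<bullet> v) + a\<^sup>2 * (norm v)\<^sup>2"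
    unfolding power2_norm_eq_inner
    by (simp add: inner_diff inner_commute power2_eq_square algebra_simps)
  finally show ?thesis .
qed

lemma expected_sq_dist_projected_step:
  assumes "x \<in> Q" and "a \<ge> 0"
  defines "R \<equiv> (1 - \<mu> * a) * (norm (x - xstar))\<^sup>2 + a\<^sup>2 * L0\<^sup>2 - a * (2 - L1 * a) * gap x"
  shows "(\<integral>\<^sup>+\<xi>. ennreal ((norm (closest_point Q (x - a *\<^sub>R g x \<xi>) - xstar))\<^sup>2) \<partial>D) \<le> ennreal R"
    and "R \<ge> 0"
proof -
  define G where "G = (\<integral>\<xi>. g x \<xi> \<partial>D)"
  define \<psi> where "\<psi> \<xi> = (norm (x - xstar))\<^sup>2 - 2 * a * ((x - xstar) \<bullet> g x \<xi>) + a\<^sup>2 * (norm (g x \<xi>))\<^sup>2" for \<xi>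
  have g_x_int: "integrable D (g x)" using g_int \<open>x \<in> Q\<close> by blast
  have "(\<lambda>\<xi>. (norm (g x \<xi>))\<^sup>2) \<in> borel_measurable D"
    using borel_measurable_integrable[OF g_x_int] by measurable
  moreover have moment: "(\<integral>\<^sup>+\<xi>. ennreal ((norm (g x \<xi>))\<^sup>2) \<partial>D) \<le> ennreal (L0\<^sup>2 + L1 * gap x)"
    using g_second_moment \<open>x \<in> Q\<close> unfolding gap_def by blast
  ultimately have sq_int: "integrable D (\<lambda>\<xi>. (norm (g x \<xi>))\<^sup>2)"
    by (intro integrableI_bounded) (auto simp: top.not_eq_extremum intro: le_less_trans)
  have "ennreal (\<integral>\<xi>. (norm (g x \<xi>))\<^sup>2 \<partial>D) = (\<integral>\<^sup>+\<xi>. ennreal ((norm (g x \<xi>))\<^sup>2) \<partial>D)"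
    by (rule nn_integral_eq_integral[symmetric]) (use sq_int in auto)
  with moment have "ennreal (\<integral>\<xi>. (norm (g x \<xi>))\<^sup>2 \<partial>D) \<le> ennreal (L0\<^sup>2 + L1 * gap x)"
    by simp
  then have second_moment: "(\<integral>\<xi>. (norm (g x \<xi>))\<^sup>2 \<partial>D) \<le> L0\<^sup>2 + L1 * gap x"
    using gap_nonneg[OF \<open>x \<in> Q\<close>] L1_nonneg by (subst (asm) ennreal_le_iff) auto
  have "f xstar \<ge> f x + ereal (G \<bullet> (xstar - x) + \<mu> / 2 * (norm (xstar - x))\<^sup>2)"
    using strong \<open>x \<in> Q\<close> xstar_Q g_unbiased unfolding strongly_convex_on_def G_def by blast
  then have descent: "(x - xstar) \<bullet> G \<ge> gap x + \<mu> / 2 * (norm (x - xstar))\<^sup>2"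
    using f_eq_gap[OF \<open>x \<in> Q\<close>] fstar_def
    by (simp add: norm_minus_commute inner_diff inner_commute algebra_simps)
  have \<psi>_int: "integrable D \<psi>"
    unfolding \<psi>_def using g_x_int sq_int by (intro integrable_inner_right Bochner_Integration.integrable_diff
        Bochner_Integration.integrable_add integrable_mult_right) auto
  have "(\<integral>\<xi>. \<psi> \<xi> \<partial>D) = (norm (x - xstar))\<^sup>2 - 2 * a * ((x - xstar) \<bullet> G) + a\<^sup>2 * (\<integral>\<xi>. (norm (g x \<xi>))\<^sup>2 \<partial>D)"
    unfolding \<psi>_def G_def using g_x_int sq_int
    by (simp add: integrable_inner_right integral_inner_right D.prob_space)
  also have "\<dots> \<le> R"
  proof -
    have "2 * a * (gap x + \<mu> / 2 * (norm (x - xstar))\<^sup>2) \<le> 2 * a * ((x - xstar) \<bullet> G)"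
      using descent \<open>a \<ge> 0\<close> by (intro mult_left_mono) auto
    moreover have "a\<^sup>2 * (\<integral>\<xi>. (norm (g x \<xi>))\<^sup>2 \<partial>D) \<le> a\<^sup>2 * (L0\<^sup>2 + L1 * gap x)"
      using second_moment by (intro mult_left_mono) auto
    ultimately show ?thesis unfolding R_def by (simp add: algebra_simps power2_eq_square)
  qed
  finally have \<psi>_le: "(\<integral>\<xi>. \<psi> \<xi> \<partial>D) \<le> R" .
  have pointwise: "(norm (closest_point Q (x - a *\<^sub>R g x \<xi>) - xstar))\<^sup>2 \<le> \<psi> \<xi>" for \<xi>
    unfolding \<psi>_def by (rule sq_dist_projected_step_le[OF \<open>x \<in> Q\<close>])
  then have \<psi>_nonneg: "\<psi> \<xi> \<ge> 0" for \<xi>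
    by (meson order_trans zero_le_power2)
  show "R \<ge> 0"
    using \<psi>_le Bochner_Integration.integral_nonneg[of D \<psi>] \<psi>_nonneg by fastforce
  have "(\<integral>\<^sup>+\<xi>. ennreal ((norm (closest_point Q (x - a *\<^sub>R g x \<xi>) - xstar))\<^sup>2) \<partial>D)
      \<le> (\<integral>\<^sup>+\<xi>. ennreal (\<psi> \<xi>) \<partial>D)"
    by (intro nn_integral_mono ennreal_leI pointwise)
  also have "\<dots> = ennreal (\<integral>\<xi>. \<psi> \<xi> \<partial>D)"
    by (rule nn_integral_eq_integral[OF \<psi>_int]) (use \<psi>_nonneg in auto)
  also have "\<dots> \<le> ennreal R"
    using \<psi>_le by (rule ennreal_leI)
  finally show "(\<integral>\<^sup>+\<xi>. ennreal ((norm (closest_point Q (x - a *\<^sub>R g x \<xi>) - xstar))\<^sup>2) \<partial>D) \<le> ennreal R" .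
qed


lemma borel_measurable_closest_point_Q[measurable]: "closest_point Q \<in> borel_measurable borel"
  using Q_convex Q_closed Q_ne by (rule borel_measurable_closest_point)

lemma lyapunov_one_step:
  assumes "x \<in> Q"
  shows "(\<integral>\<^sup>+\<xi>. ennreal (\<beta> (Suc k)) * ennreal ((norm (closest_point Q (x - \<alpha> k *\<^sub>R g x \<xi>) - xstar))\<^sup>2)
            + ennreal (weight k) * ennreal (gap x) \<partial>D)
       \<le> ennreal (\<beta> k * (norm (x - xstar))\<^sup>2 + (real k + 1) * \<alpha> k * L0\<^sup>2)"
proof -
  define R where "R = (1 - \<mu> * \<alpha> k) * (norm (x - xstar))\<^sup>2 + (\<alpha> k)\<^sup>2 * L0\<^sup>2 - \<alpha> k * (2 - L1 * \<alpha> k) * gap x"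
  have "\<alpha> k \<ge> 0" using step_size_pos[OF mu_pos] by (simp add: less_imp_le)
  note step = expected_sq_dist_projected_step[OF \<open>x \<in> Q\<close> this, folded R_def]
  have "g x \<in> borel_measurable D"
    using g_int \<open>x \<in> Q\<close> borel_measurable_integrable by blast
  then have "(\<lambda>\<xi>. ennreal ((norm (closest_point Q (x - \<alpha> k *\<^sub>R g x \<xi>) - xstar))\<^sup>2)) \<in> borel_measurable D"
    by measurable
  then have "(\<integral>\<^sup>+\<xi>. ennreal (\<beta> (Suc k)) * ennreal ((norm (closest_point Q (x - \<alpha> k *\<^sub>R g x \<xi>) - xstar))\<^sup>2)
            + ennreal (weight k) * ennreal (gap x) \<partial>D)
      = ennreal (\<beta> (Suc k)) * (\<integral>\<^sup>+\<xi>. ennreal ((norm (closest_point Q (x - \<alpha> k *\<^sub>R g x \<xi>) - xstar))\<^sup>2) \<partial>D)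
            + ennreal (weight k) * ennreal (gap x)"
    by (simp add: nn_integral_add nn_integral_cmult D.emeasure_space_1)
  also have "\<dots> \<le> ennreal (\<beta> (Suc k)) * ennreal R + ennreal (weight k) * ennreal (gap x)"
    using step(1) by (intro add_right_mono mult_left_mono) auto
  also have "\<dots> = ennreal (\<beta> (Suc k) * R + weight k * gap x)"
    using step(2) lyapunov_coeff_nonneg[OF mu_pos] weight_nonneg gap_nonneg[OF \<open>x \<in> Q\<close>]
    by (simp add: ennreal_mult ennreal_plus)
  also have "\<beta> (Suc k) * R + weight k * gap x = \<beta> k * (norm (x - xstar))\<^sup>2 + (real k + 1) * \<alpha> k * L0\<^sup>2"
    unfolding R_def using lyapunov_coeff_recursion[OF mu_pos] by (simp add: mult.assoc)
  finally show ?thesis .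
qed

(* The iterate x_k does not depend on the sample xi_k, so xi_k can be integrated out first. *)
lemma nn_integral_iter_Suc:
  assumes "k \<le> T" and \<phi>_meas: "(\<lambda>(x, y). \<phi> x y) \<in> borel_measurable (borel \<Otimes>\<^sub>M borel)"
  shows "(\<integral>\<^sup>+\<omega>. \<phi> (iter k \<omega>) (iter (Suc k) \<omega>) \<partial>samples)
       = (\<integral>\<^sup>+\<omega>. (\<integral>\<^sup>+\<xi>. \<phi> (iter k \<omega>) (closest_point Q (iter k \<omega> - \<alpha> k *\<^sub>R g (iter k \<omega>) \<xi>)) \<partial>D) \<partial>samples)"
proof -
  define h where "h \<omega> \<xi> = \<phi> (iter k \<omega>) (closest_point Q (iter k \<omega> - \<alpha> k *\<^sub>R g (iter k \<omega>) \<xi>))" for \<omega> \<xi>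
  note [measurable] = g_meas \<phi>_meas
  have "k \<le> Suc T" using \<open>k \<le> T\<close> by simp
  then have "(\<lambda>(\<omega>, \<xi>). h \<omega> \<xi>) \<in> borel_measurable (samples \<Otimes>\<^sub>M D)"
    unfolding h_def by measurable
  moreover have "h (fun_upd \<omega> k y) = h \<omega>" for \<omega> y
    by (rule ext) (simp add: h_def psg_iter_fun_upd)
  ultimately have "(\<integral>\<^sup>+\<omega>. h \<omega> (\<omega> k) \<partial>samples) = (\<integral>\<^sup>+\<omega>. (\<integral>\<^sup>+\<xi>. h \<omega> \<xi> \<partial>D) \<partial>samples)"
    by (rule nn_integral_PiM_component[OF D.prob_space_axioms \<open>k \<le> T\<close>])
  then show ?thesis by (simp add: h_def)
qed


lemma lyapunov_step:
  assumes "k \<le> T"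
  shows "ennreal (\<beta> (Suc k)) * expected_sq_dist (Suc k) + ennreal (weight k) * expected_gap k
       \<le> ennreal (\<beta> k) * expected_sq_dist k + ennreal ((real k + 1) * \<alpha> k * L0\<^sup>2)"
proof -
  interpret S: prob_space samples by (rule samples_prob_space)
  have "k \<le> Suc T" "Suc k \<le> Suc T" using assms by simp_all
  note [measurable] = measurable_iter[OF this(1)] measurable_iter[OF this(2)]
  have "ennreal (\<beta> (Suc k)) * expected_sq_dist (Suc k) + ennreal (weight k) * expected_gap k
      = (\<integral>\<^sup>+\<omega>. ennreal (\<beta> (Suc k)) * ennreal ((norm (iter (Suc k) \<omega> - xstar))\<^sup>2)
                + ennreal (weight k) * ennreal (gap (iter k \<omega>)) \<partial>samples)"
    unfolding expected_sq_dist_def expected_gap_def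
    by (simp del: psg_iter.simps add: nn_integral_add nn_integral_cmult)
  also have "\<dots> = (\<integral>\<^sup>+\<omega>. (\<integral>\<^sup>+\<xi>. ennreal (\<beta> (Suc k))
                * ennreal ((norm (closest_point Q (iter k \<omega> - \<alpha> k *\<^sub>R g (iter k \<omega>) \<xi>) - xstar))\<^sup>2)
                + ennreal (weight k) * ennreal (gap (iter k \<omega>)) \<partial>D) \<partial>samples)"
    by (rule nn_integral_iter_Suc[OF assms, where \<phi> = "\<lambda>x y. ennreal (\<beta> (Suc k))
          * ennreal ((norm (y - xstar))\<^sup>2) + ennreal (weight k) * ennreal (gap x)"]) measurable
  also have "\<dots> \<le> (\<integral>\<^sup>+\<omega>. ennreal (\<beta> k * (norm (iter k \<omega> - xstar))\<^sup>2 + (real k + 1) * \<alpha> k * L0\<^sup>2) \<partial>samples)"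
    by (intro nn_integral_mono lyapunov_one_step iter_in_Q)
  also have "\<dots> = ennreal (\<beta> k) * expected_sq_dist k + ennreal ((real k + 1) * \<alpha> k * L0\<^sup>2)"
    unfolding expected_sq_dist_def
    using lyapunov_coeff_nonneg[OF mu_pos] step_size_pos[OF mu_pos, of L1 k]
    by (simp add: nn_integral_add nn_integral_cmult ennreal_mult ennreal_plus S.emeasure_space_1)
  finally show ?thesis .
qed

lemma lyapunov_telescope:
  assumes "n \<le> Suc T"
  shows "ennreal (\<beta> n) * expected_sq_dist n + (\<Sum>k<n. ennreal (weight k) * expected_gap k)
       \<le> ennreal (\<beta> 0 * (norm (x0 - xstar))\<^sup>2 + L0\<^sup>2 * (\<Sum>k<n. (real k + 1) * \<alpha> k))"
  using assms
proof (induction n)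
  case 0
  interpret S: prob_space samples by (rule samples_prob_space)
  show ?case
    using lyapunov_coeff_nonneg[OF mu_pos]
    by (simp add: expected_sq_dist_def S.emeasure_space_1 ennreal_mult)
next
  case (Suc n)
  have sum_nonneg: "0 \<le> \<beta> 0 * (norm (x0 - xstar))\<^sup>2 + L0\<^sup>2 * (\<Sum>k<n. (real k + 1) * \<alpha> k)"
    using lyapunov_coeff_nonneg[OF mu_pos] step_size_pos[OF mu_pos]
    by (intro add_nonneg_nonneg mult_nonneg_nonneg sum_nonneg) (auto intro: less_imp_le)
  have "ennreal (\<beta> (Suc n)) * expected_sq_dist (Suc n) + (\<Sum>k<Suc n. ennreal (weight k) * expected_gap k)
      = (ennreal (\<beta> (Suc n)) * expected_sq_dist (Suc n) + ennreal (weight n) * expected_gap n)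
          + (\<Sum>k<n. ennreal (weight k) * expected_gap k)"
    by (simp add: ac_simps)
  also have "\<dots> \<le> (ennreal (\<beta> n) * expected_sq_dist n + ennreal ((real n + 1) * \<alpha> n * L0\<^sup>2))
          + (\<Sum>k<n. ennreal (weight k) * expected_gap k)"
    using Suc.prems by (intro add_right_mono lyapunov_step) simp
  also have "\<dots> = (ennreal (\<beta> n) * expected_sq_dist n + (\<Sum>k<n. ennreal (weight k) * expected_gap k))
          + ennreal ((real n + 1) * \<alpha> n * L0\<^sup>2)"
    by (simp add: ac_simps)
  also have "\<dots> \<le> ennreal (\<beta> 0 * (norm (x0 - xstar))\<^sup>2 + L0\<^sup>2 * (\<Sum>k<n. (real k + 1) * \<alpha> k))
          + ennreal ((real n + 1) * \<alpha> n * L0\<^sup>2)"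
    using Suc by (intro add_right_mono) simp
  also have "\<dots> = ennreal (\<beta> 0 * (norm (x0 - xstar))\<^sup>2 + L0\<^sup>2 * (\<Sum>k<n. (real k + 1) * \<alpha> k)
          + (real n + 1) * \<alpha> n * L0\<^sup>2)"
    using sum_nonneg step_size_pos[OF mu_pos, of L1 n] by (intro ennreal_plus[symmetric]) auto
  also have "\<dots> = ennreal (\<beta> 0 * (norm (x0 - xstar))\<^sup>2 + L0\<^sup>2 * (\<Sum>k<Suc n. (real k + 1) * \<alpha> k))"
    by (simp add: algebra_simps)
  finally show ?case .
qed


lemma weighted_gap_sum_le:
  "(\<Sum>k\<le>T. ennreal (weight k) * expected_gap k)
     \<le> ennreal ((2 * L0\<^sup>2 * (real T + 1) + L1\<^sup>2 * (norm (x0 - xstar))\<^sup>2 / 2) / \<mu>)"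
proof -
  have "(\<Sum>k\<le>T. ennreal (weight k) * expected_gap k)
      \<le> ennreal (\<beta> (Suc T)) * expected_sq_dist (Suc T) + (\<Sum>k<Suc T. ennreal (weight k) * expected_gap k)"
    unfolding lessThan_Suc_atMost by (rule add_increasing) auto
  also have "\<dots> \<le> ennreal (\<beta> 0 * (norm (x0 - xstar))\<^sup>2 + L0\<^sup>2 * (\<Sum>k<Suc T. (real k + 1) * \<alpha> k))"
    by (rule lyapunov_telescope) simp
  also have "\<dots> \<le> ennreal ((2 * L0\<^sup>2 * (real T + 1) + L1\<^sup>2 * (norm (x0 - xstar))\<^sup>2 / 2) / \<mu>)"
  proof (rule ennreal_leI)
    have "(\<Sum>k<Suc T. (real k + 1) * \<alpha> k) \<le> (\<Sum>k<Suc T. 2 / \<mu>)"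
      by (intro sum_mono step_size_mult_le mu_pos)
    also have "\<dots> = (real T + 1) * (2 / \<mu>)"
      by simp
    finally have "L0\<^sup>2 * (\<Sum>k<Suc T. (real k + 1) * \<alpha> k) \<le> L0\<^sup>2 * ((real T + 1) * (2 / \<mu>))"
      by (intro mult_left_mono) auto
    moreover have "\<beta> 0 * (norm (x0 - xstar))\<^sup>2 + L0\<^sup>2 * ((real T + 1) * (2 / \<mu>))
        = (2 * L0\<^sup>2 * (real T + 1) + L1\<^sup>2 * (norm (x0 - xstar))\<^sup>2 / 2) / \<mu>"
      using mu_pos by (simp add: lyapunov_coeff_def field_simps)
    ultimately show "\<beta> 0 * (norm (x0 - xstar))\<^sup>2 + L0\<^sup>2 * (\<Sum>k<Suc T. (real k + 1) * \<alpha> k)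
        \<le> (2 * L0\<^sup>2 * (real T + 1) + L1\<^sup>2 * (norm (x0 - xstar))\<^sup>2 / 2) / \<mu>"
      by linarith
  qed
  finally show ?thesis .
qed

lemma gap_convex_combination_le:
  assumes "finite S" and "\<forall>i\<in>S. l i \<ge> 0" and "sum l S = 1" and "\<forall>i\<in>S. y i \<in> Q"
  shows "e2ennreal (f (\<Sum>i\<in>S. l i *\<^sub>R y i) - ereal fstar) \<le> (\<Sum>i\<in>S. ennreal (l i) * ennreal (gap (y i)))"
proof -
  have "S \<noteq> {}" using \<open>sum l S = 1\<close> by auto
  have "(\<Sum>i\<in>S. l i *\<^sub>R y i) \<in> Q"
    using assms by (intro convex_sum[OF \<open>finite S\<close> Q_convex]) auto
  then have "e2ennreal (f (\<Sum>i\<in>S. l i *\<^sub>R y i) - ereal fstar) = ennreal (gap (\<Sum>i\<in>S. l i *\<^sub>R y i))"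
    by (simp add: f_eq_gap)
  also have "\<dots> \<le> ennreal (\<Sum>i\<in>S. l i * gap (y i))"
  proof (rule ennreal_leI)
    have "real_of_ereal (f (\<Sum>i\<in>S. l i *\<^sub>R y i)) \<le> (\<Sum>i\<in>S. l i * real_of_ereal (f (y i)))"
      using convex_on_sum[OF \<open>finite S\<close> \<open>S \<noteq> {}\<close>
          convex_on_real_of_ereal[OF f_convex Q_convex Q_dom f_proper]] assms by auto
    then show "gap (\<Sum>i\<in>S. l i *\<^sub>R y i) \<le> (\<Sum>i\<in>S. l i * gap (y i))"
      using \<open>sum l S = 1\<close>
      by (simp add: gap_def right_diff_distrib sum_subtractf sum_distrib_right[symmetric])
  qed
  also have "\<dots> = (\<Sum>i\<in>S. ennreal (l i) * ennreal (gap (y i)))"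
    using assms gap_nonneg by (simp add: sum_ennreal[symmetric] ennreal_mult)
  finally show ?thesis .
qed

lemma expected_gap_convex_combination_le:
  assumes "\<forall>k\<le>T. l k \<ge> 0" and "sum l {..T} = 1"
  shows "(\<integral>\<^sup>+\<omega>. e2ennreal (f (\<Sum>k\<le>T. l k *\<^sub>R iter k \<omega>) - ereal fstar) \<partial>samples)
       \<le> (\<Sum>k\<le>T. ennreal (l k) * expected_gap k)"
proof -
  have "(\<integral>\<^sup>+\<omega>. e2ennreal (f (\<Sum>k\<le>T. l k *\<^sub>R iter k \<omega>) - ereal fstar) \<partial>samples)
      \<le> (\<integral>\<^sup>+\<omega>. (\<Sum>k\<le>T. ennreal (l k) * ennreal (gap (iter k \<omega>))) \<partial>samples)"
    using assms by (intro nn_integral_mono gap_convex_combination_le) (auto simp: iter_in_Q)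
  also have "\<dots> = (\<Sum>k\<le>T. ennreal (l k) * expected_gap k)"
  proof -
    have "(\<lambda>\<omega>. ennreal (gap (iter k \<omega>))) \<in> borel_measurable samples" if "k \<le> T" for k
    proof -
      have "k \<le> Suc T" using that by simp
      note [measurable] = measurable_iter[OF this]
      show ?thesis by measurable
    qed
    then show ?thesis
      unfolding expected_gap_def by (subst nn_integral_sum) (auto intro!: sum.cong nn_integral_cmult)
  qed
  finally show ?thesis .
qed


lemma weighted_average_gap_le:
  defines "W \<equiv> \<Sum>k\<le>T. weight k"
  shows "(\<integral>\<^sup>+\<omega>. e2ennreal (f ((\<Sum>k\<le>T. weight k *\<^sub>R iter k \<omega>) /\<^sub>R W) - ereal fstar) \<partial>samples)
       \<le> ennreal ((2 * L0\<^sup>2 * (real T + 1) + L1\<^sup>2 * (norm (x0 - xstar))\<^sup>2 / 2) / (\<mu> * W))"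
proof -
  have "W \<ge> weight 0"
    unfolding W_def by (rule member_le_sum) (auto intro: weight_nonneg)
  then have "W > 0" using weight_ge[of 0] by simp
  have "(\<Sum>k\<le>T. weight k *\<^sub>R iter k \<omega>) /\<^sub>R W = (\<Sum>k\<le>T. (weight k / W) *\<^sub>R iter k \<omega>)" for \<omega>
    by (simp add: scaleR_sum_right divide_inverse_commute)
  then have "(\<integral>\<^sup>+\<omega>. e2ennreal (f ((\<Sum>k\<le>T. weight k *\<^sub>R iter k \<omega>) /\<^sub>R W) - ereal fstar) \<partial>samples)
      \<le> (\<Sum>k\<le>T. ennreal (weight k / W) * expected_gap k)"
    using \<open>W > 0\<close> weight_nonneg
    by (simp add: expected_gap_convex_combination_le W_def sum_divide_distrib[symmetric])
  also have "\<dots> = ennreal (1 / W) * (\<Sum>k\<le>T. ennreal (weight k) * expected_gap k)"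
  proof -
    have "ennreal (weight k / W) = ennreal (1 / W) * ennreal (weight k)" for k
      using \<open>W > 0\<close> weight_nonneg by (subst ennreal_mult[symmetric]) auto
    then show ?thesis by (simp add: sum_distrib_left mult.assoc)
  qed
  also have "\<dots> \<le> ennreal (1 / W) * ennreal ((2 * L0\<^sup>2 * (real T + 1) + L1\<^sup>2 * (norm (x0 - xstar))\<^sup>2 / 2) / \<mu>)"
    by (intro mult_left_mono weighted_gap_sum_le) simp
  also have "\<dots> = ennreal ((2 * L0\<^sup>2 * (real T + 1) + L1\<^sup>2 * (norm (x0 - xstar))\<^sup>2 / 2) / (\<mu> * W))"
    using \<open>W > 0\<close> by (subst ennreal_mult'[symmetric]) (simp_all add: mult.commute)
  finally show ?thesis .
qed

lemma linear_average_gap_le: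
  "(\<integral>\<^sup>+\<omega>. e2ennreal (f ((2 / ((real T + 1) * (real T + 2))) *\<^sub>R (\<Sum>k\<le>T. (real k + 1) *\<^sub>R iter k \<omega>))
       - ereal fstar) \<partial>samples)
     \<le> ennreal (4 * L0\<^sup>2 / (\<mu> * (real T + 2))
              + L1\<^sup>2 * (norm (x0 - xstar))\<^sup>2 / (\<mu> * (real T + 1) * (real T + 2)))"
proof -
  define c where "c = 2 / ((real T + 1) * (real T + 2))"
  have "c > 0" by (simp add: c_def)
  have "(\<Sum>k\<le>T. real k + 1) = (real T + 1) * (real T + 2) / 2"
    by (induction T) (auto simp: field_simps)
  then have "(\<Sum>k\<le>T. c * (real k + 1)) = 1"
    unfolding sum_distrib_left[symmetric] by (simp add: c_def)
  moreover have "c *\<^sub>R (\<Sum>k\<le>T. (real k + 1) *\<^sub>R iter k \<omega>) = (\<Sum>k\<le>T. (c * (real k + 1)) *\<^sub>R iter k \<omega>)" for \<omega>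
    by (simp add: scaleR_sum_right)
  ultimately have "(\<integral>\<^sup>+\<omega>. e2ennreal (f (c *\<^sub>R (\<Sum>k\<le>T. (real k + 1) *\<^sub>R iter k \<omega>)) - ereal fstar) \<partial>samples)
      \<le> (\<Sum>k\<le>T. ennreal (c * (real k + 1)) * expected_gap k)"
    using \<open>c > 0\<close> by (simp add: expected_gap_convex_combination_le)
  also have "\<dots> \<le> (\<Sum>k\<le>T. ennreal c * (ennreal (weight k) * expected_gap k))"
  proof (rule sum_mono)
    fix k
    have "ennreal (c * (real k + 1)) \<le> ennreal (c * weight k)"
      using weight_ge[of k] \<open>c > 0\<close> by (intro ennreal_leI mult_left_mono) auto
    also have "\<dots> = ennreal c * ennreal (weight k)"
      using \<open>c > 0\<close> by (rule ennreal_mult'[OF less_imp_le])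
    finally show "ennreal (c * (real k + 1)) * expected_gap k \<le> ennreal c * (ennreal (weight k) * expected_gap k)"
      by (simp add: mult.assoc[symmetric] mult_right_mono)
  qed
  also have "\<dots> \<le> ennreal c * ennreal ((2 * L0\<^sup>2 * (real T + 1) + L1\<^sup>2 * (norm (x0 - xstar))\<^sup>2 / 2) / \<mu>)"
    unfolding sum_distrib_left[symmetric] by (intro mult_left_mono weighted_gap_sum_le) simp
  also have "\<dots> = ennreal (c * ((2 * L0\<^sup>2 * (real T + 1) + L1\<^sup>2 * (norm (x0 - xstar))\<^sup>2 / 2) / \<mu>))"
    using \<open>c > 0\<close> by (simp only: ennreal_mult' less_imp_le)
  also have "c * ((2 * L0\<^sup>2 * (real T + 1) + L1\<^sup>2 * (norm (x0 - xstar))\<^sup>2 / 2) / \<mu>)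
      = 4 * L0\<^sup>2 / (\<mu> * (real T + 2)) + L1\<^sup>2 * (norm (x0 - xstar))\<^sup>2 / (\<mu> * (real T + 1) * (real T + 2))"
  proof -
    have "2 / (p * q) * ((2 * L0\<^sup>2 * p + L1\<^sup>2 * d / 2) / \<mu>) = 4 * L0\<^sup>2 / (\<mu> * q) + L1\<^sup>2 * d / (\<mu> * p * q)"
      if "p > 0" "q > 0" for p q d
      using that mu_pos by (simp add: field_simps)
    then show ?thesis unfolding c_def by simp
  qed
  finally show ?thesis unfolding c_def .
qed

end

theorem theorem1p7:
  fixes f :: "'a::euclidean_space \<Rightarrow> ereal"
    and Q :: "'a set"
    and D :: "'b measure"
    and g :: "'a \<Rightarrow> 'b \<Rightarrow> 'a"
    and \<mu> L0 L1 fstar :: real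
    and xstar x0 :: 'a
    and T :: nat
  assumes f_proper: "\<forall>x. f x \<noteq> -\<infinity>"
    and f_lsc: "lsc_fun f"
    and f_convex: "convex_fun f"
    and Q_ne: "Q \<noteq> {}" and Q_closed: "closed Q" and Q_convex: "convex Q"
    and Q_dom: "\<forall>x\<in>Q. f x < \<infinity>"
    and xstar_Q: "xstar \<in> Q" and fstar_def: "f xstar = ereal fstar"
    and xstar_min: "\<forall>y\<in>Q. f xstar \<le> f y"
    and mu_pos: "\<mu> > 0"
    and strong: "strongly_convex_on \<mu> Q f"
    and D_prob: "prob_space D"
    and g_meas: "(\<lambda>(x, \<xi>). g x \<xi>) \<in> borel_measurable (borel \<Otimes>\<^sub>M D)"
    and g_int: "\<forall>x\<in>Q. integrable D (g x)"
    and g_unbiased: "\<forall>x\<in>Q. (\<integral>\<xi>. g x \<xi> \<partial>D) \<in> subdiff f x"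
    and L0_nonneg: "L0 \<ge> 0" and L1_nonneg: "L1 \<ge> 0"
    and g_second_moment: "\<forall>x\<in>Q. (\<integral>\<^sup>+\<xi>. ennreal ((norm (g x \<xi>))\<^sup>2) \<partial>D)
                         \<le> ennreal (L0\<^sup>2 + L1 * (real_of_ereal (f x) - fstar))"
    and x0_Q: "x0 \<in> Q"
  shows "(\<integral>\<^sup>+\<omega>. e2ennreal (f ((\<Sum>k\<le>T. ((real k + 1) * (2 - L1 * step_size \<mu> L1 k)) *\<^sub>R
                   psg_iter Q g (step_size \<mu> L1) x0 \<omega> k)
               /\<^sub>R (\<Sum>k\<le>T. (real k + 1) * (2 - L1 * step_size \<mu> L1 k))) - ereal fstar)
          \<partial>(PiM {..T} (\<lambda>_. D)))
        \<le> ennreal ((2 * L0\<^sup>2 * (real T + 1) + L1\<^sup>2 * (norm (x0 - xstar))\<^sup>2 / 2)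
                 / (\<mu> * (\<Sum>k\<le>T. (real k + 1) * (2 - L1 * step_size \<mu> L1 k))))
      \<and> (\<integral>\<^sup>+\<omega>. e2ennreal (f ((2 / ((real T + 1) * (real T + 2))) *\<^sub>R
                   (\<Sum>k\<le>T. (real k + 1) *\<^sub>R psg_iter Q g (step_size \<mu> L1) x0 \<omega> k)) - ereal fstar)
          \<partial>(PiM {..T} (\<lambda>_. D)))
        \<le> ennreal (4 * L0\<^sup>2 / (\<mu> * (real T + 2))
                 + L1\<^sup>2 * (norm (x0 - xstar))\<^sup>2 / (\<mu> * (real T + 1) * (real T + 2)))"
proof -
  interpret psg_run D f Q g \<mu> L0 L1 fstar xstar x0 T
    by (intro psg_run.intro psg_run_axioms.intro) (rule assms)+
  show ?thesis
    using weighted_average_gap_le linear_average_gap_le by (rule conjI)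
qed

end
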